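(* Let $\omega=(\alpha^+,\alpha^-,\gamma_1,\gamma_2)\in\Omega$. Then the principal value product representation $$\mathsf{E}_\omega(z)=\lim_{R\to\infty}\prod_{i:\,\alpha_i^+>R^{-2}}(1-\alpha_i^+z)\prod_{i:\,\alpha_i^->R^{-2}}(1+\alpha_i^-z)$$ holds if and only if $$\gamma_1=\lim_{R\to\infty}\left(\sum_{i:\,\alpha_i^+>R^{-2}}\alpha_i^+-\sum_{i:\,\alpha_i^->R^{-2}}\alpha_i^-\right)\quad\text{and}\quad\gamma_2=0.$$
   Context: $\Omega$ is the set of $\omega=(\alpha^+,\alpha^-,\gamma_1,\gamma_2)$ with $\alpha^\pm=(\alpha_1^\pm\ge\alpha_2^\pm\ge\dots\ge0)$ non-increasing sequences of non-negative reals, $\sum_i(\alpha_i^+)^2+\sum_i(\alpha_i^-)^2<\infty$, $\gamma_1\in\mathbb{R}$, $\gamma_2\ge0$. For $\omega\in\Omega$, $\mathsf{E}_\omega(z)=e^{-\gamma_1 z-\frac{\gamma_2}{2}z^2}\prod_{i}e^{z\alpha_i^+}(1-z\alpha_i^+)\prod_{i}e^{-z\alpha_i^-}(1+z\alpha_i^-)$. *)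

theory Defs
  imports "HOL-Analysis.Analysis"
begin

text \<open>The parameter space Omega: omega = (ap, am, g1, g2), sequences indexed from 0.\<close>
definition Omega :: "(nat \<Rightarrow> real) \<Rightarrow> (nat \<Rightarrow> real) \<Rightarrow> real \<Rightarrow> real \<Rightarrow> bool" where
  "Omega ap am g1 g2 \<longleftrightarrow>
     antimono ap \<and> (\<forall>i. ap i \<ge> 0) \<and>
     antimono am \<and> (\<forall>i. am i \<ge> 0) \<and>
     summable (\<lambda>i. (ap i)\<^sup>2) \<and> summable (\<lambda>i. (am i)\<^sup>2) \<and> g2 \<ge> 0"

definition E_omega :: "(nat \<Rightarrow> real) \<Rightarrow> (nat \<Rightarrow> real) \<Rightarrow> real \<Rightarrow> real \<Rightarrow> complex \<Rightarrow> complex" where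
  "E_omega ap am g1 g2 z =
     exp (- of_real g1 * z - of_real (g2 / 2) * z\<^sup>2)
     * (\<Prod>i. exp (z * of_real (ap i)) * (1 - z * of_real (ap i)))
     * (\<Prod>i. exp (- z * of_real (am i)) * (1 + z * of_real (am i)))"

end

theory Submission
  imports Defs "HOL-Complex_Analysis.Weierstrass_Factorization" "HOL-Real_Asymp.Real_Asymp"
begin

text \<open>
  Write each linear factor as \<open>1 - w = E\<^sub>1(w) e\<^bsup>-w\<^esup>\<close> with the Weierstrass elementary
  factor \<open>E\<^sub>1(w) = (1 - w) e\<^bsup>w\<^esup>\<close>. Then the truncated product at level \<open>R\<close> is the truncated
  canonical product times \<open>exp (- z S\<^sub>R)\<close>, where \<open>S\<^sub>R\<close> is the truncated signed sum
  of the \<open>\<alpha>\<close>'s. Since \<open>E\<^sub>1(w) - 1 = O(|w|\<^sup>2)\<close> and the \<open>\<alpha>\<close>'s are square summable,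
  the truncated canonical products converge to the full one, which is the factor of
  \<open>E\<^sub>\<omega>\<close> next to \<open>exp (- \<gamma>\<^sub>1 z - \<gamma>\<^sub>2 z\<^sup>2 / 2)\<close>. Hence convergence to \<open>E\<^sub>\<omega>\<close> amounts to
  \<open>exp (- z S\<^sub>R) \<longrightarrow> exp (- \<gamma>\<^sub>1 z - \<gamma>\<^sub>2 z\<^sup>2 / 2)\<close> wherever the canonical product is
  non-zero. For small real \<open>z \<noteq> 0\<close> this says \<open>S\<^sub>R \<longrightarrow> \<gamma>\<^sub>1 + \<gamma>\<^sub>2 z / 2\<close>, and comparing
  two values \<open>z = \<plusminus>c\<close> forces \<open>\<gamma>\<^sub>2 = 0\<close>.
\<close>

lemma summable_power2_LIMSEQ_zero:
  fixes f :: "nat \<Rightarrow> real"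
  assumes "summable (\<lambda>n. (f n)\<^sup>2)"
  shows "f \<longlonglongrightarrow> 0"
proof -
  have "(\<lambda>n. sqrt ((f n)\<^sup>2)) \<longlonglongrightarrow> sqrt 0"
    by (intro tendsto_real_sqrt summable_LIMSEQ_zero assms)
  then show ?thesis
    by (simp add: tendsto_rabs_zero_iff)
qed

lemma abs_convergent_prod_weierstrass_factor_one:
  fixes w :: "nat \<Rightarrow> complex"
  assumes "summable (\<lambda>n. (norm (w n))\<^sup>2)"
  shows "abs_convergent_prod (\<lambda>n. weierstrass_factor 1 (w n))"
  unfolding abs_convergent_prod_conv_summable
proof (rule summable_comparison_test_ev)
  have "(\<lambda>n. norm (w n)) \<longlonglongrightarrow> 0"
    using assms by (rule summable_power2_LIMSEQ_zero)
  from order_tendstoD(2)[OF this, of "1 / 2"]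
  have "eventually (\<lambda>n. norm (w n) \<le> 1 / 2) sequentially"
    by (auto elim: eventually_mono)
  then show "eventually (\<lambda>n. norm (norm (weierstrass_factor 1 (w n) - 1)) \<le> 3 * (norm (w n))\<^sup>2)
      sequentially"
    by eventually_elim (use weierstrass_factor_bound[of _ 1] in \<open>simp add: power2_eq_square\<close>)
  show "summable (\<lambda>n. 3 * (norm (w n))\<^sup>2)"
    using assms by (rule summable_mult)
qed

lemma prod_one_minus_eq_weierstrass_factor:
  fixes w :: "'a \<Rightarrow> complex"
  shows "(\<Prod>i\<in>A. 1 - w i) = (\<Prod>i\<in>A. weierstrass_factor 1 (w i)) * exp (- (\<Sum>i\<in>A. w i))"
proof (cases "finite A")
  case True
  have "(\<Prod>i\<in>A. weierstrass_factor 1 (w i)) * exp (- (\<Sum>i\<in>A. w i))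
      = (\<Prod>i\<in>A. weierstrass_factor 1 (w i) * exp (- w i))"
    by (simp add: True exp_sum prod.distrib flip: sum_negf)
  also have "\<dots> = (\<Prod>i\<in>A. 1 - w i)"
    by (simp add: weierstrass_factor_def exp_minus mult.assoc)
  finally show ?thesis ..
qed simp

lemma prod_one_minus_of_real_mult_eq:
  "(\<Prod>i\<in>A. 1 - of_real (a i) * z)
     = (\<Prod>i\<in>A. weierstrass_factor 1 (of_real (a i) * z)) * exp (- z * of_real (sum a A))"
  using prod_one_minus_eq_weierstrass_factor[of "\<lambda>i. of_real (a i) * z" A]
  by (simp add: sum_distrib_left sum_negf mult.commute)

lemma superlevel_set_eq_lessThan:
  fixes a :: "nat \<Rightarrow> real"
  assumes "antimono a" "a \<longlonglongrightarrow> 0" "t > 0"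
  shows "{i. t < a i} = {..<(LEAST i. a i \<le> t)}"
proof -
  obtain n where "a n \<le> t"
    using order_tendstoD(2)[OF assms(2,3)] by (meson eventually_sequentially le_refl less_imp_le)
  then have "a (LEAST i. a i \<le> t) \<le> t"
    by (rule LeastI)
  then show ?thesis
    using \<open>antimono a\<close> not_less_Least
    by (fastforce simp: antimono_def not_le dest: order.strict_trans2)
qed

lemma tendsto_prod_superlevel_at_right_0:
  fixes a :: "nat \<Rightarrow> real" and f :: "nat \<Rightarrow> 'b :: real_normed_field"
  assumes "antimono a" "a \<longlonglongrightarrow> 0" "convergent_prod f" "\<And>i. a i = 0 \<Longrightarrow> f i = 1"
  shows "((\<lambda>t. \<Prod>i | t < a i. f i) \<longlongrightarrow> prodinf f) (at_right 0)"
proof -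
  have nonneg: "0 \<le> a i" for i
    using decseq_ge[OF assms(1,2)] .
  have eventually_below: "eventually (\<lambda>t. t < a i) (at_right 0)" if "0 < a i" for i
    using order_tendstoD(2)[OF tendsto_ident_at that] .
  show ?thesis
  proof (cases "\<forall>i. 0 < a i")
    case True
    define N where "N t = (LEAST i. a i \<le> t)" for t
    have "filterlim N at_top (at_right 0)"
      unfolding filterlim_at_top
    proof
      fix n
      have "eventually (\<lambda>t. t < a n) (at_right 0)"
        using True by (simp add: eventually_below)
      then show "eventually (\<lambda>t. n \<le> N t) (at_right 0)"
        using eventually_at_right_less
        by eventually_elim
          (metis N_def superlevel_set_eq_lessThan[OF assms(1,2)] lessThan_iff mem_Collect_eq less_imp_le)
    qed
    moreover have "(\<lambda>n. \<Prod>i<n. f i) \<longlonglongrightarrow> prodinf f"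
      using convergent_prod_LIMSEQ[OF assms(3)] by (simp add: LIMSEQ_lessThan_iff_atMost)
    ultimately have "((\<lambda>t. \<Prod>i<N t. f i) \<longlongrightarrow> prodinf f) (at_right 0)"
      by (rule filterlim_compose[rotated])
    moreover have "eventually (\<lambda>t. (\<Prod>i<N t. f i) = (\<Prod>i | t < a i. f i)) (at_right 0)"
      using eventually_at_right_less
      by eventually_elim (simp add: N_def superlevel_set_eq_lessThan[OF assms(1,2)])
    ultimately show ?thesis
      by (rule Lim_transform_eventually)
  next
    case False
    then obtain m where "a m = 0"
      using nonneg by (metis less_eq_real_def)
    define B where "B = {i. 0 < a i}"
    have "B \<subseteq> {..<m}"
      using \<open>antimono a\<close> \<open>a m = 0\<close> unfolding B_def antimono_def
      by (metis lessThan_iff linorder_not_le mem_Collect_eq subsetI)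
    then have "finite B"
      by (rule finite_subset) simp
    have prodinf_eq: "prodinf f = (\<Prod>i\<in>B. f i)"
      using \<open>finite B\<close> assms(4) nonneg by (intro prodinf_finite) (auto simp: B_def order_less_le)
    have "eventually (\<lambda>t. \<forall>i\<in>B. t < a i) (at_right 0)"
      using \<open>finite B\<close> eventually_below by (intro eventually_ball_finite) (auto simp: B_def)
    then have "eventually (\<lambda>t. {i. t < a i} = B) (at_right 0)"
      using eventually_at_right_less by eventually_elim (auto simp: B_def)
    then show ?thesis
      unfolding prodinf_eq by (auto intro: tendsto_eventually elim: eventually_mono)
  qed
qed

definition canonical_product :: "(nat \<Rightarrow> real) \<Rightarrow> complex \<Rightarrow> complex" where
  "canonical_product a z = (\<Prod>i. weierstrass_factor 1 (of_real (a i) * z))"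

lemma abs_convergent_prod_canonical_product:
  assumes "summable (\<lambda>i. (a i)\<^sup>2)"
  shows "abs_convergent_prod (\<lambda>i. weierstrass_factor 1 (of_real (a i) * z))"
  using summable_mult2[OF assms, of "(norm z)\<^sup>2"]
  by (intro abs_convergent_prod_weierstrass_factor_one) (simp add: norm_mult power_mult_distrib)

lemma tendsto_canonical_product_truncation:
  assumes "antimono a" "summable (\<lambda>i. (a i)\<^sup>2)"
  shows "((\<lambda>t. \<Prod>i | t < a i. weierstrass_factor 1 (of_real (a i) * z)) \<longlongrightarrow> canonical_product a z)
           (at_right 0)"
  unfolding canonical_product_def
  using assms abs_convergent_prod_canonical_product[OF assms(2)]
  by (intro tendsto_prod_superlevel_at_right_0 summable_power2_LIMSEQ_zero
        abs_convergent_prod_imp_convergent_prod) auto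

lemma canonical_product_nonzero:
  assumes "antimono a" "summable (\<lambda>i. (a i)\<^sup>2)" "norm z * a 0 < 1"
  shows "canonical_product a z \<noteq> 0"
proof -
  have "of_real (a i) * z \<noteq> 1" for i
  proof
    assume "of_real (a i) * z = 1"
    then have "norm z * a i = 1"
      using decseq_ge[OF assms(1) summable_power2_LIMSEQ_zero[OF assms(2)], of i]
      by (metis abs_of_nonneg mult.commute norm_mult norm_of_real norm_one)
    moreover have "norm z * a i \<le> norm z * a 0"
      using assms(1) by (simp add: antimono_def mult_left_mono)
    ultimately show False
      using assms(3) by simp
  qed
  then show ?thesis
    unfolding canonical_product_def using abs_convergent_prod_canonical_product[OF assms(2)]
    by (intro prodinf_nonzero abs_convergent_prod_imp_convergent_prod) auto
qed

lemma tendsto_exp_of_real_cancel: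
  fixes f :: "'a \<Rightarrow> real"
  assumes "x \<noteq> 0" "((\<lambda>y. exp (of_real (x * f y)) :: complex) \<longlongrightarrow> exp (of_real (x * L))) F"
  shows "(f \<longlongrightarrow> L) F"
proof -
  have "((\<lambda>y. exp (x * f y)) \<longlongrightarrow> exp (x * L)) F"
    using assms(2) by (simp only: exp_of_real tendsto_of_real_iff)
  then have "((\<lambda>y. ln (exp (x * f y)) / x) \<longlongrightarrow> ln (exp (x * L)) / x) F"
    using assms(1) by (intro tendsto_divide tendsto_ln) auto
  then show ?thesis
    using assms(1) by simp
qed

lemma tendsto_mult_exp_linear_iff:
  fixes T :: "complex \<Rightarrow> 'a \<Rightarrow> complex" and C :: "complex \<Rightarrow> complex" and S :: "'a \<Rightarrow> real"
  assumes "F \<noteq> bot" "\<And>z. (T z \<longlongrightarrow> C z) F"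
    and "c > 0" "\<And>x. \<bar>x\<bar> < c \<Longrightarrow> C (of_real x) \<noteq> 0"
  shows "(\<forall>z. ((\<lambda>y. T z y * exp (- z * of_real (S y)))
              \<longlongrightarrow> exp (- of_real g1 * z - of_real (g2 / 2) * z\<^sup>2) * C z) F)
         \<longleftrightarrow> (S \<longlongrightarrow> g1) F \<and> g2 = 0"
proof
  assume lim: "\<forall>z. ((\<lambda>y. T z y * exp (- z * of_real (S y)))
                   \<longlongrightarrow> exp (- of_real g1 * z - of_real (g2 / 2) * z\<^sup>2) * C z) F"
  have S_lim: "(S \<longlongrightarrow> g1 + g2 * x / 2) F" if "x \<noteq> 0" "\<bar>x\<bar> < c" for x
  proof -
    let ?z = "complex_of_real x"
    have "C ?z \<noteq> 0"
      using assms(4) that(2) .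
    then have quotient_lim: "((\<lambda>y. T ?z y * exp (- ?z * of_real (S y)) / T ?z y)
        \<longlongrightarrow> exp (- of_real g1 * ?z - of_real (g2 / 2) * ?z\<^sup>2) * C ?z / C ?z) F"
      using lim assms(2) by (intro tendsto_divide) auto
    have quotient_eq: "eventually (\<lambda>y. T ?z y * exp (- ?z * of_real (S y)) / T ?z y
        = exp (of_real (- x * S y))) F"
      using tendsto_imp_eventually_ne[OF assms(2) \<open>C ?z \<noteq> 0\<close>] by eventually_elim simp
    have limit_eq: "exp (- of_real g1 * ?z - of_real (g2 / 2) * ?z\<^sup>2) * C ?z / C ?z
        = exp (of_real (- x * (g1 + g2 * x / 2)))"
      using \<open>C ?z \<noteq> 0\<close> by (simp add: algebra_simps power2_eq_square)
    have "((\<lambda>y. exp (of_real (- x * S y)) :: complex)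
        \<longlongrightarrow> exp (of_real (- x * (g1 + g2 * x / 2)))) F"
      using Lim_transform_eventually[OF quotient_lim[unfolded limit_eq] quotient_eq] .
    then show ?thesis
      using that(1) by (intro tendsto_exp_of_real_cancel[of "- x"]) auto
  qed
  have "(S \<longlongrightarrow> g1 + g2 * (c / 2) / 2) F" "(S \<longlongrightarrow> g1 + g2 * (- c / 2) / 2) F"
    using S_lim[of "c / 2"] S_lim[of "- c / 2"] assms(3) by auto
  then have "g1 + g2 * (c / 2) / 2 = g1 + g2 * (- c / 2) / 2"
    using assms(1) by (rule tendsto_unique[rotated])
  then have "g2 = 0"
    using assms(3) by simp
  then show "(S \<longlongrightarrow> g1) F \<and> g2 = 0"
    using S_lim[of "c / 2"] assms(3) by simp
next
  assume "(S \<longlongrightarrow> g1) F \<and> g2 = 0"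
  then show "\<forall>z. ((\<lambda>y. T z y * exp (- z * of_real (S y)))
               \<longlongrightarrow> exp (- of_real g1 * z - of_real (g2 / 2) * z\<^sup>2) * C z) F"
    using assms(2) by (auto intro!: tendsto_eq_intros simp: mult.commute)
qed

theorem proposition5p7:
  fixes ap am :: "nat \<Rightarrow> real" and g1 g2 :: real
  assumes "Omega ap am g1 g2"
  shows "(\<forall>z::complex.
            ((\<lambda>R::real. (\<Prod>i | ap i > 1 / R\<^sup>2. (1 - of_real (ap i) * z))
                       * (\<Prod>i | am i > 1 / R\<^sup>2. (1 + of_real (am i) * z)))
             \<longlongrightarrow> E_omega ap am g1 g2 z) at_top)
         \<longleftrightarrow>
         (((\<lambda>R::real. (\<Sum>i | ap i > 1 / R\<^sup>2. ap i) - (\<Sum>i | am i > 1 / R\<^sup>2. am i))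
             \<longlongrightarrow> g1) at_top
          \<and> g2 = 0)"
proof -
  from assms have ap: "antimono ap" "summable (\<lambda>i. (ap i)\<^sup>2)" "ap 0 \<ge> 0"
    and am: "antimono am" "summable (\<lambda>i. (am i)\<^sup>2)" "am 0 \<ge> 0"
    unfolding Omega_def by auto
  define C where "C z = canonical_product ap z * canonical_product am (- z)" for z
  define T where "T z R = (\<Prod>i | 1 / R\<^sup>2 < ap i. weierstrass_factor 1 (of_real (ap i) * z))
    * (\<Prod>i | 1 / R\<^sup>2 < am i. weierstrass_factor 1 (of_real (am i) * - z))" for z and R :: real
  define S where "S R = (\<Sum>i | ap i > 1 / R\<^sup>2. ap i) - (\<Sum>i | am i > 1 / R\<^sup>2. am i)" for R :: real
  have principal_product_eq:
    "(\<Prod>i | ap i > 1 / R\<^sup>2. (1 - of_real (ap i) * z)) * (\<Prod>i | am i > 1 / R\<^sup>2. (1 + of_real (am i) * z))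
     = T z R * exp (- z * of_real (S R))" for z R
    using prod_one_minus_of_real_mult_eq[where a = ap and z = z]
      prod_one_minus_of_real_mult_eq[where a = am and z = "- z"]
    by (simp add: T_def S_def algebra_simps flip: exp_add)
  have E_omega_eq: "E_omega ap am g1 g2 z = exp (- of_real g1 * z - of_real (g2 / 2) * z\<^sup>2) * C z" for z
    by (simp add: E_omega_def C_def canonical_product_def weierstrass_factor_def mult_ac)
  have "filterlim (\<lambda>R::real. 1 / R\<^sup>2) (at_right 0) at_top"
    by real_asymp
  then have T_lim: "(T z \<longlongrightarrow> C z) at_top" for z
    unfolding T_def C_def
    by (intro tendsto_mult filterlim_compose[OF tendsto_canonical_product_truncation] ap(1,2) am(1,2))
  define c where "c = min (1 / (ap 0 + 1)) (1 / (am 0 + 1))"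
  have C_nonzero: "C (of_real x) \<noteq> 0" if "\<bar>x\<bar> < c" for x
  proof -
    have "\<bar>x\<bar> * ap 0 < 1" "\<bar>x\<bar> * am 0 < 1"
      using that ap(3) am(3) by (auto simp: c_def field_simps)
    then show ?thesis
      unfolding C_def using ap am by (simp add: canonical_product_nonzero)
  qed
  have "c > 0"
    using ap(3) am(3) by (simp add: c_def)
  show ?thesis
    unfolding principal_product_eq E_omega_eq S_def[abs_def, symmetric]
    using T_lim C_nonzero \<open>c > 0\<close> by (intro tendsto_mult_exp_linear_iff) auto
qed

end
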